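(* Let $\mathbb X$ be a deterministic $n\times p$ design matrix. Observe $\mathbf y=\mathbf f+\boldsymbol\xi$ where the random vector $\boldsymbol\xi\in\mathbf R^n$ satisfies $\mathbb E\exp(\alpha^T\boldsymbol\xi)\le\exp(\|\alpha\|_2^2K^2/2)$ for all $\alpha\in\mathbf R^n$, and let $K>0$ be the smallest positive number with this property. Let $\hat K$ be a given estimator and $\delta:=\mathbb P(\hat K^2<K^2)$. Then for all $x>0$, with probability at least $1-\delta-3e^{-x}$, the estimator $\hat{\boldsymbol\mu}_{\textsc{spa}}$ satisfies \[\|\hat{\boldsymbol\mu}_{\textsc{spa}}-\mathbf f\|_2^2\le\inf_{\boldsymbol\theta\in\mathbf R^p}\Big[\|\mathbb X\boldsymbol\theta-\mathbf f\|_2^2+31K^2x+(64\hat K^2+4K^2)\Big(\tfrac12+2\|\boldsymbol\theta\|_0\log\Big(\tfrac{ep}{1\vee\|\boldsymbol\theta\|_0}\Big)\Big)\Big].\]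
   Context: $\|\boldsymbol\theta\|_0$ is the number of nonzero coordinates. For each $J\subseteq\{1,\dots,p\}$, $A_J$ is the orthogonal projection matrix onto the span of the columns of $\mathbb X$ with indices in $J$ (so $A_J\mathbf y$ is the least squares estimator on that span). Weights: $\pi_J\propto e^{-|J|}\binom{p}{|J|}^{-1}$ normalized so that $\sum_J\pi_J=1$. Let $\Lambda=\{\boldsymbol\lambda=(\lambda_J)_{J\subseteq\{1,\dots,p\}}:\sum_J\lambda_J=1,\lambda_J\ge0\}$ and for $\boldsymbol\lambda\in\Lambda$, $\hat{\boldsymbol\mu}_{\boldsymbol\lambda}=\sum_J\lambda_JA_J\mathbf y$. Then $\hat{\boldsymbol\mu}_{\textsc{spa}}=\hat{\boldsymbol\mu}_{\hat{\boldsymbol\lambda}}$ where $\hat{\boldsymbol\lambda}$ minimizes over $\Lambda$ the function $\|\mathbf y-\hat{\boldsymbol\mu}_{\boldsymbol\lambda}\|_2^2+\sum_J\lambda_J\big(\frac12\|A_J\mathbf y-\hat{\boldsymbol\mu}_{\boldsymbol\lambda}\|_2^2+32\hat K^2\log\frac1{\pi_J}\big)$. *)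

theory Defs
  imports "HOL-Analysis.Analysis" "HOL-Probability.Probability"
begin

text \<open>Design matrix X :: real^'p^'n (n rows, p columns); J ranges over subsets of the
column index type 'p (which plays the role of {1..p}, p = CARD('p)).\<close>

definition proj_cols :: "real^'p^'n \<Rightarrow> 'p set \<Rightarrow> real^'n \<Rightarrow> real^'n" where
  "proj_cols X J y = closest_point (span ((\<lambda>j. column j X) ` J)) y"

definition l0norm :: "real^'p \<Rightarrow> nat" where
  "l0norm \<theta> = card {j. \<theta> $ j \<noteq> 0}"

definition prior_w :: "'p::finite set \<Rightarrow> real" where
  "prior_w J = exp (- real (card J)) / real (CARD('p) choose card J)"

definition prior :: "'p::finite set \<Rightarrow> real" where
  "prior J = prior_w J / (\<Sum>J'\<in>(UNIV :: 'p set set). prior_w J')"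

definition simplex_weights :: "('p::finite set \<Rightarrow> real) set" where
  "simplex_weights = {lam. (\<forall>J. lam J \<ge> 0) \<and> (\<Sum>J\<in>UNIV. lam J) = 1}"

definition mu_lam :: "real^'p::finite^'n \<Rightarrow> ('p set \<Rightarrow> real) \<Rightarrow> real^'n \<Rightarrow> real^'n" where
  "mu_lam X lam y = (\<Sum>J\<in>UNIV. lam J *\<^sub>R proj_cols X J y)"

definition spa_crit :: "real^'p::finite^'n \<Rightarrow> real \<Rightarrow> real^'n \<Rightarrow> ('p set \<Rightarrow> real) \<Rightarrow> real" where
  "spa_crit X Khat y lam =
     (norm (y - mu_lam X lam y))\<^sup>2
     + (\<Sum>J\<in>UNIV. lam J * ((1/2) * (norm (proj_cols X J y - mu_lam X lam y))\<^sup>2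
                              + 32 * Khat\<^sup>2 * ln (1 / prior J)))"

definition is_spa_weight :: "real^'p::finite^'n \<Rightarrow> real \<Rightarrow> real^'n \<Rightarrow> ('p set \<Rightarrow> real) \<Rightarrow> bool" where
  "is_spa_weight X Khat y lam \<longleftrightarrow> lam \<in> simplex_weights \<and>
     (\<forall>lam' \<in> simplex_weights. spa_crit X Khat y lam \<le> spa_crit X Khat y lam')"

definition subgauss_cond :: "'a measure \<Rightarrow> ('a \<Rightarrow> real^'n) \<Rightarrow> real \<Rightarrow> bool" where
  "subgauss_cond M \<xi> K \<longleftrightarrow> (\<forall>\<alpha>::real^'n.
      integrable M (\<lambda>\<omega>. exp (\<alpha> \<bullet> \<xi> \<omega>)) \<and>
      (\<integral>\<omega>. exp (\<alpha> \<bullet> \<xi> \<omega>) \<partial>M) \<le> exp ((norm \<alpha>)\<^sup>2 * K\<^sup>2 / 2))"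

end

theory Submission
  imports Defs
begin

(* First-order optimality of the aggregation weights in the direction of the vertex e_J gives
   deterministically
     |mu - f|^2 <= |f - A_J y|^2 + 32 Khat^2 log(1/pi_J)
                   + sum_J' lam_J' (2 <xi, A_J' y - A_J y> - |A_J' y - A_J y|^2/2 - 32 Khat^2 log(1/pi_J')),
   and since A_J' y - A_J y lies in the column span V of J u J', each bracket is at most
   2 |P_V xi|^2 minus the penalty.  For sub-Gaussian noise |P_V xi|^2 <= 4 K^2 (dim V/2 + t)
   except with probability e^-t (Gaussian decoupling and a Chernoff bound); a union bound over all
   pairs J, J' at the levels t = x + log(1/pi_J) + log(1/pi_J') costs only e^-x because the prior
   sums to one.  Taking J = supp theta and log(1/pi_J) <= 3/4 + 2|J| log(ep/|J|) gives the bound. *)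

section \<open>Gaussian integrals\<close>

abbreviation std_normal :: "real measure" where
  "std_normal \<equiv> density lborel (\<lambda>x. ennreal (std_normal_density x))"

lemma prob_space_std_normal: "prob_space std_normal"
  using prob_space_normal_density[of 1 0] by simp

lemma nn_integral_std_normal_eq:
  assumes "\<sigma> > 0" "C \<ge> 0" "g \<in> borel_measurable borel"
    and "\<And>x. std_normal_density x * g x = C * normal_density \<mu> \<sigma> x"
  shows "(\<integral>\<^sup>+x. ennreal (g x) \<partial>std_normal) = ennreal C"
proof -
  have "(\<integral>\<^sup>+x. ennreal (g x) \<partial>std_normal)
      = (\<integral>\<^sup>+x. ennreal C * ennreal (normal_density \<mu> \<sigma> x) \<partial>lborel)"
    using assms(3) by (subst nn_integral_density) (auto simp: ennreal_mult'[symmetric] assms(2,4))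
  also have "\<dots> = ennreal C * (\<integral>\<^sup>+x. ennreal (normal_density \<mu> \<sigma> x) \<partial>lborel)"
    by (rule nn_integral_cmult) auto
  also have "(\<integral>\<^sup>+x. ennreal (normal_density \<mu> \<sigma> x) \<partial>lborel) = 1"
    using assms(1) by (subst nn_integral_eq_integral) auto
  finally show ?thesis by simp
qed

lemma nn_integral_std_normal_exp_linear:
  "(\<integral>\<^sup>+x. ennreal (exp (c * x)) \<partial>std_normal) = ennreal (exp (c\<^sup>2 / 2))"
proof (rule nn_integral_std_normal_eq[where \<sigma> = 1 and \<mu> = c])
  fix x :: real
  have "exp (- x\<^sup>2 / 2) * exp (c * x) = exp (c\<^sup>2 / 2) * exp (- (x - c)\<^sup>2 / 2)"
    by (simp add: exp_add[symmetric] power2_eq_square field_simps)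
  then show "std_normal_density x * exp (c * x) = exp (c\<^sup>2 / 2) * normal_density c 1 x"
    by (simp add: normal_density_def)
qed auto

lemma nn_integral_std_normal_exp_square:
  "(\<integral>\<^sup>+x. ennreal (exp (x\<^sup>2 / 4)) \<partial>std_normal) = ennreal (sqrt 2)"
proof (rule nn_integral_std_normal_eq[where \<sigma> = "sqrt 2" and \<mu> = 0])
  fix x :: real
  have "exp (- x\<^sup>2 / 2) * exp (x\<^sup>2 / 4) = exp (- x\<^sup>2 / 4)"
    by (simp add: exp_add[symmetric])
  moreover have "sqrt (2 * pi * 2) = sqrt 2 * sqrt (2 * pi)"
    by (simp add: real_sqrt_mult[symmetric] ac_simps)
  ultimately show "std_normal_density x * exp (x\<^sup>2 / 4) = sqrt 2 * normal_density 0 (sqrt 2) x"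
    by (simp add: normal_density_def field_simps)
qed auto

lemma nn_integral_PiM_exp_sum:
  assumes "prob_space M" "finite I" "\<And>i. i \<in> I \<Longrightarrow> h i \<in> borel_measurable M"
  shows "(\<integral>\<^sup>+g. ennreal (exp (\<Sum>i\<in>I. h i (g i))) \<partial>PiM I (\<lambda>_. M))
       = (\<Prod>i\<in>I. \<integral>\<^sup>+x. ennreal (exp (h i x)) \<partial>M)"
proof -
  interpret prob_space M by (rule assms(1))
  interpret product_prob_space "\<lambda>_. M" I by unfold_locales
  have "(\<integral>\<^sup>+g. ennreal (exp (\<Sum>i\<in>I. h i (g i))) \<partial>PiM I (\<lambda>_. M))
      = (\<integral>\<^sup>+g. (\<Prod>i\<in>I. ennreal (exp (h i (g i)))) \<partial>PiM I (\<lambda>_. M))"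
    using assms(2) by (simp add: exp_sum prod_ennreal)
  also have "\<dots> = (\<Prod>i\<in>I. \<integral>\<^sup>+x. ennreal (exp (h i x)) \<partial>M)"
    using assms(2,3) by (intro product_nn_integral_prod) auto
  finally show ?thesis .
qed

section \<open>Orthogonal projection onto a subspace\<close>

lemma norm_sum_orthonormal:
  assumes "finite B" "pairwise orthogonal B" "\<forall>u\<in>B. norm u = 1"
  shows "(norm (\<Sum>u\<in>B. a u *\<^sub>R u))\<^sup>2 = (\<Sum>u\<in>B. (a u)\<^sup>2)"
  using assms by (simp add: norm_sum_Pythagorean pairwise_ortho_scaleR)

lemma closest_point_in_subspace:
  fixes V :: "'a::euclidean_space set"
  assumes "subspace V"
  shows "closest_point V y \<in> V"
  using assms by (intro closest_point_in_set) (auto simp: closed_subspace dest: subspace_0)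

lemma borel_measurable_closest_point_subspace:
  fixes V :: "'a::euclidean_space set"
  assumes "subspace V"
  shows "closest_point V \<in> borel_measurable borel"
  using assms
  by (intro borel_measurable_continuous_onI continuous_on_closest_point)
    (auto simp: subspace_imp_convex closed_subspace dest: subspace_0)

lemma closest_point_subspace_orthogonal:
  fixes V :: "'a::euclidean_space set"
  assumes "subspace V" "w \<in> V"
  shows "(y - closest_point V y) \<bullet> w = 0"
proof -
  let ?p = "closest_point V y"
  have "(y - ?p) \<bullet> ((?p + s *\<^sub>R w) - ?p) \<le> 0" for s
    using assms closest_point_in_subspace[OF assms(1)]
    by (intro closest_point_dot) (auto simp: subspace_imp_convex closed_subspace subspace_add subspace_scale)
  from this[of 1] this[of "-1"] show ?thesis by simp
qed

lemma closest_point_subspace_unique: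
  fixes V :: "'a::euclidean_space set"
  assumes "subspace V" "p \<in> V" "\<And>w. w \<in> V \<Longrightarrow> (y - p) \<bullet> w = 0"
  shows "closest_point V y = p"
proof (rule closest_point_unique[symmetric])
  show "convex V" "closed V" using assms(1) by (simp_all add: subspace_imp_convex closed_subspace)
  show "\<forall>z\<in>V. dist y p \<le> dist y z"
  proof
    fix z assume "z \<in> V"
    then have "orthogonal (y - p) (p - z)"
      using assms by (simp add: orthogonal_def subspace_diff)
    then have "(norm ((y - p) + (p - z)))\<^sup>2 = (norm (y - p))\<^sup>2 + (norm (p - z))\<^sup>2"
      by (rule norm_add_Pythagorean)
    then have "(norm (y - p))\<^sup>2 \<le> (norm (y - z))\<^sup>2" by simp
    then show "dist y p \<le> dist y z"
      unfolding dist_norm by (rule power2_le_imp_le) simp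
  qed
  show "p \<in> V" by (rule assms(2))
qed

lemma closest_point_subspace_add:
  fixes V :: "'a::euclidean_space set"
  assumes "subspace V"
  shows "closest_point V (x + y) = closest_point V x + closest_point V y"
proof (rule closest_point_subspace_unique[OF assms])
  show "closest_point V x + closest_point V y \<in> V"
    using assms closest_point_in_subspace[OF assms] by (simp add: subspace_add)
  show "(x + y - (closest_point V x + closest_point V y)) \<bullet> w = 0" if "w \<in> V" for w
    using closest_point_subspace_orthogonal[OF assms that, of x]
      closest_point_subspace_orthogonal[OF assms that, of y]
    by (simp add: algebra_simps inner_diff_left inner_add_left)
qed

lemma closest_point_span_orthonormal:
  fixes B :: "'a::euclidean_space set"
  assumes "finite B" "pairwise orthogonal B" "\<forall>u\<in>B. norm u = 1"
  shows "closest_point (span B) y = (\<Sum>u\<in>B. (y \<bullet> u) *\<^sub>R u)"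
proof (rule closest_point_subspace_unique)
  show "(\<Sum>u\<in>B. (y \<bullet> u) *\<^sub>R u) \<in> span B" by (intro span_sum span_scale span_base)
  show "(y - (\<Sum>u\<in>B. (y \<bullet> u) *\<^sub>R u)) \<bullet> w = 0" if "w \<in> span B" for w
  proof -
    have "(\<Sum>v\<in>B. (w \<bullet> v) *\<^sub>R v) = w"
      using orthonormal_basis_expand[of B w] assms that by auto
    then have "y \<bullet> w = y \<bullet> (\<Sum>v\<in>B. (w \<bullet> v) *\<^sub>R v)" by simp
    also have "\<dots> = (\<Sum>v\<in>B. (w \<bullet> v) * (y \<bullet> v))" by (simp add: inner_sum_right)
    also have "\<dots> = (\<Sum>u\<in>B. (y \<bullet> u) *\<^sub>R u) \<bullet> w"
      unfolding inner_sum_left by (intro sum.cong) (simp_all add: inner_commute)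
    finally show ?thesis by (simp add: inner_diff_left)
  qed
qed simp

lemma inner_closest_point_subspace_le:
  fixes V :: "'a::euclidean_space set"
  assumes "subspace V" "w \<in> V"
  shows "2 * (\<xi> \<bullet> w) - (norm w)\<^sup>2 / 2 \<le> 2 * (norm (closest_point V \<xi>))\<^sup>2"
proof -
  let ?p = "closest_point V \<xi>"
  have "\<xi> \<bullet> w = ?p \<bullet> w"
    using closest_point_subspace_orthogonal[OF assms, of \<xi>] by (simp add: inner_diff_left)
  moreover have "0 \<le> (norm (2 *\<^sub>R ?p - w))\<^sup>2 / 2" by simp
  ultimately show ?thesis
    by (simp add: power2_norm_eq_inner inner_diff_left inner_diff_right inner_commute algebra_simps)
qed

lemma norm_closest_point_subspace_noise_le:
  fixes V :: "'a::euclidean_space set"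
  assumes "subspace V" "z \<in> V"
  shows "(norm (f - closest_point V (f + \<xi>)))\<^sup>2 \<le> (norm (f - z))\<^sup>2 + (norm (closest_point V \<xi>))\<^sup>2"
proof -
  let ?P = "closest_point V"
  have in_V: "?P y \<in> V" for y using closest_point_in_subspace[OF assms(1)] .
  have orth: "orthogonal (f - ?P f) (- ?P \<xi>)" "orthogonal (f - ?P f) (?P f - z)"
    using closest_point_subspace_orthogonal[OF assms(1)] assms in_V
    by (auto simp: orthogonal_def subspace_diff subspace_neg)
  have "f - ?P (f + \<xi>) = (f - ?P f) + - ?P \<xi>"
    by (simp add: closest_point_subspace_add[OF assms(1)])
  then have "(norm (f - ?P (f + \<xi>)))\<^sup>2 = (norm (f - ?P f))\<^sup>2 + (norm (- ?P \<xi>))\<^sup>2"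
    using norm_add_Pythagorean[OF orth(1)] by (simp only:)
  moreover have "(norm (f - z))\<^sup>2 = (norm (f - ?P f))\<^sup>2 + (norm (?P f - z))\<^sup>2"
    using norm_add_Pythagorean[OF orth(2)] by simp
  ultimately show ?thesis by simp
qed

section \<open>Projections of sub-Gaussian vectors\<close>

lemma subgauss_nn_integral_exp_le:
  assumes "subgauss_cond M \<xi> K"
  shows "(\<integral>\<^sup>+\<omega>. ennreal (exp (\<alpha> \<bullet> \<xi> \<omega>)) \<partial>M) \<le> ennreal (exp ((norm \<alpha>)\<^sup>2 * K\<^sup>2 / 2))"
  using assms unfolding subgauss_cond_def
  by (subst nn_integral_eq_integral) (auto intro: ennreal_leI)

lemma nn_integral_PiM_std_normal_exp_linear:
  assumes "finite I"
  shows "(\<integral>\<^sup>+g. ennreal (exp (\<Sum>i\<in>I. a i * g i)) \<partial>PiM I (\<lambda>_. std_normal))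
       = ennreal (exp ((\<Sum>i\<in>I. (a i)\<^sup>2) / 2))"
proof -
  have "(\<integral>\<^sup>+g. ennreal (exp (\<Sum>i\<in>I. a i * g i)) \<partial>PiM I (\<lambda>_. std_normal))
      = (\<Prod>i\<in>I. \<integral>\<^sup>+x. ennreal (exp (a i * x)) \<partial>std_normal)"
    by (rule nn_integral_PiM_exp_sum[OF prob_space_std_normal assms]) auto
  then show ?thesis
    using assms by (simp add: nn_integral_std_normal_exp_linear prod_ennreal exp_sum[symmetric] sum_divide_distrib)
qed

lemma subgauss_nn_integral_exp_orthonormal_le:
  assumes "subgauss_cond M \<xi> K"
    and B: "finite B" "pairwise orthogonal B" "\<forall>u\<in>B. norm u = 1"
  shows "(\<integral>\<^sup>+\<omega>. ennreal (exp (\<Sum>u\<in>B. a u * (\<xi> \<omega> \<bullet> u))) \<partial>M)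
       \<le> ennreal (exp (K\<^sup>2 * (\<Sum>u\<in>B. (a u)\<^sup>2) / 2))"
proof -
  define \<alpha> where "\<alpha> = (\<Sum>u\<in>B. a u *\<^sub>R u)"
  have "\<alpha> \<bullet> \<xi> \<omega> = (\<Sum>u\<in>B. a u * (\<xi> \<omega> \<bullet> u))" for \<omega>
    unfolding \<alpha>_def inner_sum_left by (intro sum.cong) (simp_all add: inner_commute)
  moreover have "(norm \<alpha>)\<^sup>2 = (\<Sum>u\<in>B. (a u)\<^sup>2)"
    unfolding \<alpha>_def by (rule norm_sum_orthonormal[OF B])
  ultimately show ?thesis
    using subgauss_nn_integral_exp_le[OF assms(1), of \<alpha>] by (simp add: mult.commute)
qed

text \<open>Gaussian decoupling: \<open>exp (s\<^sup>2/2) = E exp (s g)\<close> for a standard normal \<open>g\<close> turns the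
  quadratic exponent into a linear one, to which the sub-Gaussian bound applies for each fixed
  Gaussian vector; Fubini exchanges the two integrations.\<close>
lemma subgauss_nn_integral_exp_sum_sq_inner_le:
  fixes \<xi> :: "'a \<Rightarrow> real^'n" and B :: "(real^'n) set"
  assumes M: "prob_space M" and [measurable]: "\<xi> \<in> borel_measurable M"
    and sg: "subgauss_cond M \<xi> K" and K: "K > 0"
    and B: "finite B" "pairwise orthogonal B" "\<forall>u\<in>B. norm u = 1"
  shows "(\<integral>\<^sup>+\<omega>. ennreal (exp ((\<Sum>u\<in>B. (\<xi> \<omega> \<bullet> u)\<^sup>2) / (4 * K\<^sup>2))) \<partial>M)
       \<le> ennreal (sqrt 2 ^ card B)"
proof -
  define c where "c = 1 / (sqrt 2 * K)"
  have c2: "c\<^sup>2 = 1 / (2 * K\<^sup>2)" using K by (simp add: c_def power2_eq_square field_simps)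
  define G where "G = PiM B (\<lambda>_. std_normal)"
  define F where "F = (\<lambda>\<omega> g. ennreal (exp (\<Sum>u\<in>B. c * (\<xi> \<omega> \<bullet> u) * g u)))"
  interpret prob_space M by (rule M)
  interpret G: prob_space G
    unfolding G_def by (intro prob_space_PiM prob_space_std_normal)
  interpret pair_sigma_finite M G by unfold_locales
  have F_measurable: "case_prod F \<in> borel_measurable (M \<Otimes>\<^sub>M G)"
  proof -
    have [measurable]: "(\<lambda>g. g u) \<in> borel_measurable G" if "u \<in> B" for u
      unfolding G_def using that by (intro measurable_component_singleton[THEN measurable_compose]) auto
    have "(\<lambda>(\<omega>, g). \<Sum>u\<in>B. c * (\<xi> \<omega> \<bullet> u) * g u) \<in> borel_measurable (M \<Otimes>\<^sub>M G)"
      unfolding split_beta' by (intro borel_measurable_sum) measurable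
    then show ?thesis unfolding F_def split_beta' by measurable
  qed
  have gauss: "(\<integral>\<^sup>+g. F \<omega> g \<partial>G) = ennreal (exp ((\<Sum>u\<in>B. (\<xi> \<omega> \<bullet> u)\<^sup>2) / (4 * K\<^sup>2)))" for \<omega>
    using nn_integral_PiM_std_normal_exp_linear[OF B(1), of "\<lambda>u. c * (\<xi> \<omega> \<bullet> u)"] K
    by (simp add: F_def G_def power_mult_distrib c2 sum_divide_distrib)
  have subgauss: "(\<integral>\<^sup>+\<omega>. F \<omega> g \<partial>M) \<le> ennreal (exp (\<Sum>u\<in>B. (g u)\<^sup>2 / 4))" for g
    using subgauss_nn_integral_exp_orthonormal_le[OF sg B, of "\<lambda>u. c * g u"] K
    by (simp add: F_def mult_ac power_mult_distrib c2 sum_divide_distrib sum_distrib_left)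
  have "(\<integral>\<^sup>+\<omega>. ennreal (exp ((\<Sum>u\<in>B. (\<xi> \<omega> \<bullet> u)\<^sup>2) / (4 * K\<^sup>2))) \<partial>M)
      = (\<integral>\<^sup>+\<omega>. (\<integral>\<^sup>+g. F \<omega> g \<partial>G) \<partial>M)"
    by (simp add: gauss)
  also have "\<dots> = (\<integral>\<^sup>+g. (\<integral>\<^sup>+\<omega>. F \<omega> g \<partial>M) \<partial>G)"
    by (rule Fubini'[OF F_measurable, symmetric])
  also have "\<dots> \<le> (\<integral>\<^sup>+g. ennreal (exp (\<Sum>u\<in>B. (g u)\<^sup>2 / 4)) \<partial>G)"
    by (intro nn_integral_mono subgauss)
  also have "\<dots> = (\<Prod>u\<in>B. \<integral>\<^sup>+x. ennreal (exp (x\<^sup>2 / 4)) \<partial>std_normal)"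
    unfolding G_def by (rule nn_integral_PiM_exp_sum[OF prob_space_std_normal B(1)]) auto
  also have "\<dots> = ennreal (sqrt 2 ^ card B)"
    by (simp add: nn_integral_std_normal_exp_square ennreal_power)
  finally show ?thesis .
qed

lemma subgauss_norm_closest_point_tail:
  fixes \<xi> :: "'a \<Rightarrow> real^'n" and V :: "(real^'n) set"
  assumes M: "prob_space M" and [measurable]: "\<xi> \<in> borel_measurable M"
    and sg: "subgauss_cond M \<xi> K" and K: "K > 0"
    and V: "subspace V" "dim V \<le> d"
  shows "measure M {\<omega>\<in>space M. 4 * K\<^sup>2 * (d / 2 + t) \<le> (norm (closest_point V (\<xi> \<omega>)))\<^sup>2}
       \<le> exp (- t)"
proof -
  interpret prob_space M by (rule M)
  obtain B where B: "pairwise orthogonal B" "\<And>u. u \<in> B \<Longrightarrow> norm u = 1" "independent B"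
      "card B = dim V" "span B = V"
    using orthonormal_basis_subspace[OF V(1)] by metis
  have fin: "finite B" using B(3) by (rule independent_imp_finite)
  have unit: "\<forall>u\<in>B. norm u = 1" using B(2) by blast
  have norm_eq: "(norm (closest_point V y))\<^sup>2 = (\<Sum>u\<in>B. (y \<bullet> u)\<^sup>2)" for y
    using closest_point_span_orthonormal[OF fin B(1) unit, of y] norm_sum_orthonormal[OF fin B(1) unit]
    unfolding B(5) by simp
  define T where "T = 4 * K\<^sup>2 * (d / 2 + t)"
  define Z where "Z = (\<lambda>\<omega>. \<Sum>u\<in>B. (\<xi> \<omega> \<bullet> u)\<^sup>2)"
  have [measurable]: "Z \<in> borel_measurable M" unfolding Z_def by measurable
  have mgf: "(\<integral>\<^sup>+\<omega>. ennreal (exp (Z \<omega> / (4 * K\<^sup>2))) * indicator (space M) \<omega> \<partial>M)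
      \<le> ennreal (sqrt 2 ^ card B)"
  proof -
    have "(\<integral>\<^sup>+\<omega>. ennreal (exp (Z \<omega> / (4 * K\<^sup>2))) * indicator (space M) \<omega> \<partial>M)
        = (\<integral>\<^sup>+\<omega>. ennreal (exp (Z \<omega> / (4 * K\<^sup>2))) \<partial>M)"
      by (intro nn_integral_cong) auto
    also have "\<dots> \<le> ennreal (sqrt 2 ^ card B)"
      unfolding Z_def by (rule subgauss_nn_integral_exp_sum_sq_inner_le[OF M _ sg K fin B(1) unit]) simp
    finally show ?thesis .
  qed
  have chernoff: "exp (- T / (4 * K\<^sup>2)) * sqrt 2 ^ card B \<le> exp (- t)"
  proof -
    have "sqrt 2 \<le> sqrt ((exp (1 / 2))\<^sup>2)"
      using exp_ge_add_one_self[of 1] by (simp add: exp_double[symmetric])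
    then have "sqrt 2 ^ card B \<le> exp (1 / 2) ^ card B" by (intro power_mono) auto
    also have "\<dots> = exp (card B / 2)" by (simp add: exp_of_nat_mult[symmetric])
    also have "\<dots> \<le> exp (d / 2)" using B(4) V(2) by simp
    finally have "exp (- T / (4 * K\<^sup>2)) * sqrt 2 ^ card B \<le> exp (- T / (4 * K\<^sup>2)) * exp (d / 2)"
      by simp
    also have "\<dots> = exp (- t)"
      using K by (simp add: T_def exp_add[symmetric] field_simps)
    finally show ?thesis .
  qed
  have "T \<le> Z \<omega> \<longleftrightarrow> 1 \<le> exp (- T / (4 * K\<^sup>2)) * exp (Z \<omega> / (4 * K\<^sup>2))" for \<omega>
    using K by (simp add: exp_add[symmetric] add_divide_distrib[symmetric] zero_le_divide_iff divide_le_cancel)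
  then have "emeasure M {\<omega>\<in>space M. T \<le> Z \<omega>}
      = emeasure M {\<omega>\<in>space M. 1 \<le> ennreal (exp (- T / (4 * K\<^sup>2))) * ennreal (exp (Z \<omega> / (4 * K\<^sup>2)))}"
    by (simp add: ennreal_mult'[symmetric])
  also have "\<dots> \<le> ennreal (exp (- T / (4 * K\<^sup>2)))
      * (\<integral>\<^sup>+\<omega>. ennreal (exp (Z \<omega> / (4 * K\<^sup>2))) * indicator (space M) \<omega> \<partial>M)"
    by (rule nn_integral_Markov_inequality) auto
  also have "\<dots> \<le> ennreal (exp (- T / (4 * K\<^sup>2))) * ennreal (sqrt 2 ^ card B)"
    by (rule mult_left_mono[OF mgf]) simp
  also have "\<dots> \<le> ennreal (exp (- t))"
    using chernoff by (simp add: ennreal_mult'[symmetric])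
  finally have "measure M {\<omega>\<in>space M. T \<le> Z \<omega>} \<le> exp (- t)"
    by (simp add: emeasure_eq_measure)
  then show ?thesis by (simp add: T_def Z_def norm_eq)
qed

section \<open>The sparsity prior\<close>

lemma prior_w_pos: "prior_w (J :: 'p::finite set) > 0"
  using card_mono[of UNIV J] by (simp add: prior_w_def zero_less_binomial)

text \<open>There are \<open>p choose k\<close> supports of size \<open>k\<close>, so the normalizing constant is a truncated
  geometric series in \<open>e\<^sup>-\<^sup>1\<close>.\<close>
lemma sum_prior_w_eq: "(\<Sum>J\<in>(UNIV :: 'p::finite set set). prior_w J) = (\<Sum>k\<le>CARD('p). exp (-1) ^ k)"
proof -
  have "(\<Sum>J\<in>(UNIV :: 'p set set). prior_w J)
      = (\<Sum>k\<le>CARD('p). \<Sum>J\<in>{J. J \<in> (UNIV :: 'p set set) \<and> card J = k}. prior_w J)"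
    by (rule sum.group[symmetric]) (auto simp: card_mono)
  also have "\<dots> = (\<Sum>k\<le>CARD('p). exp (-1) ^ k)"
  proof (intro sum.cong refl)
    fix k assume "k \<in> {..CARD('p)}"
    then have "card {J :: 'p set. card J = k} = CARD('p) choose k"
      "real (CARD('p) choose k) > 0"
      using n_subsets[of "UNIV :: 'p set" k] by (simp_all add: zero_less_binomial)
    then show "(\<Sum>J\<in>{J. J \<in> (UNIV :: 'p set set) \<and> card J = k}. prior_w J) = exp (-1) ^ k"
      by (simp add: prior_w_def exp_of_nat_mult[symmetric])
  qed
  finally show ?thesis .
qed

lemma exp_one_ge: "exp (1::real) \<ge> 5/2"
proof -
  have "(1 + 1 / real (8::nat)) ^ 8 \<le> exp (1::real)"
    by (rule exp_ge_one_plus_x_over_n_power_n) auto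
  moreover have "(5/2::real) \<le> (1 + 1 / real (8::nat)) ^ 8" by (simp add: power_def)
  ultimately show ?thesis by linarith
qed

lemma sum_prior_w_bounds:
  "1 \<le> (\<Sum>J\<in>(UNIV :: 'p::finite set set). prior_w J)"
  "ln (\<Sum>J\<in>(UNIV :: 'p::finite set set). prior_w J) \<le> 3/4"
proof -
  let ?Z = "\<Sum>J\<in>(UNIV :: 'p set set). prior_w J"
  have q: "0 < exp (-1::real)" "exp (-1::real) \<le> 2/5"
    using exp_one_ge by (simp_all add: exp_minus field_simps)
  have "(\<Sum>k\<in>{0}. exp (-1::real) ^ k) \<le> (\<Sum>k\<le>CARD('p). exp (-1) ^ k)"
    by (rule sum_mono2) auto
  then show Z1: "1 \<le> ?Z" by (simp add: sum_prior_w_eq)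
  have "?Z \<le> (\<Sum>k. exp (-1::real) ^ k)"
    unfolding sum_prior_w_eq using q
    by (intro sum_le_suminf summable_geometric) auto
  also have "\<dots> = 1 / (1 - exp (-1))"
    using q by (intro suminf_geometric) simp
  also have "\<dots> \<le> 1 + 3/4"
    using q by (simp add: field_simps)
  finally have "ln ?Z \<le> ln (1 + 3/4)"
    using Z1 by simp
  also have "\<dots> \<le> 3/4" by (rule ln_add_one_self_le_self) simp
  finally show "ln ?Z \<le> 3/4" .
qed

lemma prior_pos: "prior (J :: 'p::finite set) > 0"
  using prior_w_pos[of J] sum_prior_w_bounds(1)[where 'p='p] by (simp add: prior_def)

lemma sum_prior: "(\<Sum>J\<in>(UNIV :: 'p::finite set set). prior J) = 1"
  using sum_prior_w_bounds(1)[where 'p='p] by (simp add: prior_def sum_divide_distrib[symmetric])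

lemma ln_inverse_prior:
  fixes J :: "'p::finite set"
  shows "ln (1 / prior J) = ln (\<Sum>J'\<in>(UNIV :: 'p set set). prior_w J') + card J + ln (real (CARD('p) choose card J))"
proof -
  let ?Z = "\<Sum>J'\<in>(UNIV :: 'p set set). prior_w J'"
  have pos: "real (CARD('p) choose card J) > 0" "?Z > 0"
    using card_mono[of UNIV J] sum_prior_w_bounds(1)[where 'p='p] by (simp_all add: zero_less_binomial)
  then have "1 / prior J = ?Z * exp (card J) * real (CARD('p) choose card J)"
    by (simp add: prior_def prior_w_def exp_minus field_simps)
  then show ?thesis using pos by (simp add: ln_mult)
qed

lemma card_le_ln_inverse_prior: "real (card J) \<le> ln (1 / prior (J :: 'p::finite set))"
proof -
  have "0 \<le> ln (real (CARD('p) choose card J))"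
    using card_mono[of UNIV J] by (simp add: Suc_le_eq zero_less_binomial)
  moreover have "0 \<le> ln (\<Sum>J'\<in>(UNIV :: 'p set set). prior_w J')"
    using sum_prior_w_bounds(1)[where 'p='p] by simp
  ultimately show ?thesis using ln_inverse_prior[of J] by linarith
qed

lemma ln_binomial_le:
  assumes "1 \<le> k" "k \<le> n"
  shows "ln (real (n choose k)) \<le> k * ln (exp 1 * n / k)"
proof -
  have k: "real k > 0" using assms by simp
  have "real k ^ k / fact k \<le> exp (real k)"
    using sum_le_suminf[of "\<lambda>i. real k ^ i /\<^sub>R fact i" "{k}"] exp_converges[of "real k"]
    by (auto simp: sums_iff divide_inverse mult.commute)
  then have fact_ge: "real k ^ k / exp (real k) \<le> fact k" by (simp add: field_simps)
  have "real (n choose k) \<le> real n ^ k / fact k"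
    using binomial_fact_pow[of n k]
    by (simp add: field_simps) (metis of_nat_fact of_nat_le_iff of_nat_mult of_nat_power)
  also have "\<dots> \<le> real n ^ k / (real k ^ k / exp (real k))"
    using fact_ge k by (intro divide_left_mono) auto
  also have "\<dots> = (exp 1 * n / k) ^ k"
    using k by (simp add: power_divide power_mult_distrib exp_of_nat_mult[symmetric] field_simps)
  finally have "ln (real (n choose k)) \<le> ln ((exp 1 * n / k) ^ k)"
    using assms by (subst ln_le_cancel_iff) (auto simp: zero_less_binomial)
  also have "\<dots> = k * ln (exp 1 * n / k)"
    using assms by (simp add: ln_realpow)
  finally show ?thesis .
qed

lemma one_le_ln_sparsity:
  assumes "k \<le> n" "1 \<le> n"
  shows "1 \<le> ln (exp 1 * real n / max 1 (real k))"
proof -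
  have "exp 1 \<le> exp 1 * real n / max 1 (real k)"
    using assms by (simp add: field_simps)
  then show ?thesis using assms by (subst ln_ge_iff) auto
qed

lemma ln_inverse_prior_le:
  fixes J :: "'p::finite set"
  shows "ln (1 / prior J) \<le> 3/4 + 2 * real (card J) * ln (exp 1 * real CARD('p) / max 1 (real (card J)))"
proof (cases "J = {}")
  case True
  then have "ln (1 / prior J) = ln (\<Sum>J'\<in>(UNIV :: 'p set set). prior_w J')" using ln_inverse_prior[of J] by simp
  with True show ?thesis using sum_prior_w_bounds(2)[where 'p='p] by simp
next
  case False
  let ?k = "real (card J)" and ?l = "ln (exp 1 * real CARD('p) / max 1 (real (card J)))"
  have k: "1 \<le> card J" "card J \<le> CARD('p)"
    using False card_mono[of UNIV J] by (auto simp: Suc_le_eq card_gt_0_iff)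
  have "ln (1 / prior J) \<le> 3/4 + ?k + ?k * ?l"
    using ln_inverse_prior[of J] sum_prior_w_bounds(2)[where 'p='p] ln_binomial_le[OF k] k(1) by simp
  also have "\<dots> \<le> 3/4 + 2 * ?k * ?l"
    using one_le_ln_sparsity[OF k(2)] k by (simp add: algebra_simps)
  finally show ?thesis .
qed

section \<open>Q-aggregation\<close>

definition qagg_crit :: "'v::real_inner \<Rightarrow> ('i::finite \<Rightarrow> 'v) \<Rightarrow> ('i \<Rightarrow> real) \<Rightarrow> ('i \<Rightarrow> real) \<Rightarrow> real" where
  "qagg_crit y p c lam =
     (norm (y - (\<Sum>i\<in>UNIV. lam i *\<^sub>R p i)))\<^sup>2
     + (\<Sum>i\<in>UNIV. lam i * ((1/2) * (norm (p i - (\<Sum>i\<in>UNIV. lam i *\<^sub>R p i)))\<^sup>2 + c i))"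

lemma spa_crit_eq_qagg_crit:
  "spa_crit X Kh y lam = qagg_crit y (\<lambda>J. proj_cols X J y) (\<lambda>J. 32 * Kh\<^sup>2 * ln (1 / prior J)) lam"
  by (simp add: spa_crit_def qagg_crit_def mu_lam_def)

text \<open>On the simplex the criterion is a linear function of the weights plus
  \<open>\<parallel>\<mu>\<parallel>\<^sup>2/2\<close>, because \<open>\<Sum>\<lambda>\<^sub>i \<parallel>p\<^sub>i - \<mu>\<parallel>\<^sup>2 = \<Sum>\<lambda>\<^sub>i \<parallel>p\<^sub>i\<parallel>\<^sup>2 - \<parallel>\<mu>\<parallel>\<^sup>2\<close>.\<close>
lemma qagg_crit_eq:
  fixes p :: "'i::finite \<Rightarrow> 'v::real_inner"
  assumes "(\<Sum>i\<in>UNIV. lam i) = 1"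
  defines "m \<equiv> \<Sum>i\<in>UNIV. lam i *\<^sub>R p i"
  shows "qagg_crit y p c lam = y \<bullet> y - 2 * (y \<bullet> m) + (m \<bullet> m) / 2
           + (\<Sum>i\<in>UNIV. lam i * ((p i \<bullet> p i) / 2 + c i))"
proof -
  have "(\<Sum>i\<in>UNIV. lam i * (p i \<bullet> m)) = m \<bullet> m"
    by (simp add: m_def inner_sum_left)
  moreover have "(\<Sum>i\<in>UNIV. lam i * ((1/2) * (norm (p i - m))\<^sup>2 + c i))
      = (\<Sum>i\<in>UNIV. lam i * ((p i \<bullet> p i) / 2 + c i)) - (\<Sum>i\<in>UNIV. lam i * (p i \<bullet> m))
        + (\<Sum>i\<in>UNIV. lam i) * (m \<bullet> m) / 2"
    by (simp add: power2_norm_eq_inner inner_diff_left inner_diff_right inner_commute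
        algebra_simps sum.distrib sum_subtractf sum_distrib_left sum_distrib_right sum_divide_distrib)
  ultimately show ?thesis
    using assms(1) unfolding qagg_crit_def m_def[symmetric]
    by (simp add: power2_norm_eq_inner inner_diff_left inner_diff_right inner_commute algebra_simps)
qed

lemma sum_towards_vertex:
  fixes g :: "'i::finite \<Rightarrow> 'v::real_vector"
  shows "(\<Sum>i\<in>UNIV. ((1 - t) * lam i + t * (if i = j then 1 else 0)) *\<^sub>R g i)
       = (1 - t) *\<^sub>R (\<Sum>i\<in>UNIV. lam i *\<^sub>R g i) + t *\<^sub>R g j"
proof -
  have "(\<Sum>i\<in>UNIV. (t * (if i = j then 1 else 0)) *\<^sub>R g i) = (\<Sum>i\<in>UNIV. if i = j then t *\<^sub>R g j else 0)"
    by (intro sum.cong) auto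
  then show ?thesis by (simp add: scaleR_add_left sum.distrib scaleR_sum_right)
qed

lemma nonneg_if_nonneg_near_zero:
  fixes B D :: real
  assumes "\<And>t. 0 < t \<Longrightarrow> t \<le> 1 \<Longrightarrow> 0 \<le> B + t * D"
  shows "0 \<le> B"
proof (rule ccontr)
  assume "\<not> 0 \<le> B"
  define t where "t = min 1 (- B / (2 * (\<bar>D\<bar> + 1)))"
  have "0 < - B / (2 * (\<bar>D\<bar> + 1))" using \<open>\<not> 0 \<le> B\<close> by (intro divide_pos_pos) auto
  then have t: "0 < t" "t \<le> 1" by (auto simp: t_def)
  have "t * (\<bar>D\<bar> + 1) \<le> - B / (2 * (\<bar>D\<bar> + 1)) * (\<bar>D\<bar> + 1)"
    by (intro mult_right_mono) (auto simp: t_def)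
  also have "\<dots> = - B / 2"
    using abs_ge_zero[of D] by (simp add: field_simps)
  finally have t3: "t * (\<bar>D\<bar> + 1) \<le> - B / 2" .
  have "t * D \<le> t * (\<bar>D\<bar> + 1)" using t by (intro mult_left_mono) auto
  then show False using assms[OF t] t3 \<open>\<not> 0 \<le> B\<close> by linarith
qed

lemma qagg_crit_towards_vertex:
  fixes p :: "'i::finite \<Rightarrow> 'v::real_inner" and c :: "'i \<Rightarrow> real"
  assumes lam_sum: "(\<Sum>i\<in>UNIV. lam i) = 1"
  defines "m \<equiv> \<Sum>i\<in>UNIV. lam i *\<^sub>R p i"
    and "Lin \<equiv> \<Sum>i\<in>UNIV. lam i * ((p i \<bullet> p i) / 2 + c i)"
  shows "qagg_crit y p c (\<lambda>i. (1 - t) * lam i + t * (if i = j then 1 else 0)) - qagg_crit y p c lam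
       = t * (- 2 * (y \<bullet> (p j - m)) + m \<bullet> (p j - m) + (p j \<bullet> p j) / 2 + c j - Lin
              + t * ((p j - m) \<bullet> (p j - m) / 2))"
proof -
  let ?lt = "\<lambda>i. (1 - t) * lam i + t * (if i = j then 1 else 0)"
  have lt_sum: "(\<Sum>i\<in>UNIV. ?lt i) = 1"
    using sum_towards_vertex[of t lam j "\<lambda>_. 1::real"] lam_sum by simp
  have m_lt: "(\<Sum>i\<in>UNIV. ?lt i *\<^sub>R p i) = m + t *\<^sub>R (p j - m)"
    using sum_towards_vertex[of t lam j p] by (simp add: m_def algebra_simps)
  have Lin_lt: "(\<Sum>i\<in>UNIV. ?lt i * ((p i \<bullet> p i) / 2 + c i)) = Lin + t * ((p j \<bullet> p j) / 2 + c j - Lin)"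
    using sum_towards_vertex[of t lam j "\<lambda>i. (p i \<bullet> p i) / 2 + c i"] by (simp add: Lin_def algebra_simps)
  have "qagg_crit y p c ?lt = y \<bullet> y - 2 * (y \<bullet> (m + t *\<^sub>R (p j - m)))
      + ((m + t *\<^sub>R (p j - m)) \<bullet> (m + t *\<^sub>R (p j - m))) / 2 + (Lin + t * ((p j \<bullet> p j) / 2 + c j - Lin))"
    using qagg_crit_eq[OF lt_sum, of y p c] unfolding m_lt Lin_lt .
  moreover have "qagg_crit y p c lam = y \<bullet> y - 2 * (y \<bullet> m) + (m \<bullet> m) / 2 + Lin"
    using qagg_crit_eq[OF lam_sum, of y p c] unfolding m_def Lin_def .
  ultimately show ?thesis
    by (simp add: inner_add_left inner_add_right inner_diff_left inner_diff_right inner_commute field_simps)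
qed

text \<open>First-order optimality of \<open>\<lambda>\<close> in the direction of a vertex \<open>e\<^sub>j\<close> of the simplex, combined
  with the quadratic expansion of the criterion, compares the aggregate with the single fit
  \<open>p j\<close> without loss in the leading constant.\<close>
lemma qagg_oracle_bound:
  fixes p :: "'i::finite \<Rightarrow> 'v::real_inner"
  assumes lam_nonneg: "\<And>i. lam i \<ge> 0" and lam_sum: "(\<Sum>i\<in>UNIV. lam i) = 1"
    and opt: "\<And>lam'. (\<And>i. lam' i \<ge> 0) \<Longrightarrow> (\<Sum>i\<in>UNIV. lam' i) = 1
               \<Longrightarrow> qagg_crit (f + \<xi>) p c lam \<le> qagg_crit (f + \<xi>) p c lam'"
  shows "(norm (f - (\<Sum>i\<in>UNIV. lam i *\<^sub>R p i)))\<^sup>2 \<le> (norm (f - p j))\<^sup>2 + c j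
     + (\<Sum>i\<in>UNIV. lam i * (2 * (\<xi> \<bullet> (p i - p j)) - (norm (p i - p j))\<^sup>2 / 2 - c i))"
proof -
  define m where "m = (\<Sum>i\<in>UNIV. lam i *\<^sub>R p i)"
  define Lin where "Lin = (\<Sum>i\<in>UNIV. lam i * ((p i \<bullet> p i) / 2 + c i))"
  define B where "B = - 2 * ((f + \<xi>) \<bullet> (p j - m)) + m \<bullet> (p j - m) + (p j \<bullet> p j) / 2 + c j - Lin"
  have "0 \<le> B + t * ((p j - m) \<bullet> (p j - m) / 2)" if t: "0 < t" "t \<le> 1" for t
  proof -
    let ?lt = "\<lambda>i. (1 - t) * lam i + t * (if i = j then 1 else 0)"
    have "qagg_crit (f + \<xi>) p c lam \<le> qagg_crit (f + \<xi>) p c ?lt"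
      using lam_nonneg lam_sum t sum_towards_vertex[of t lam j "\<lambda>_. 1::real"] by (intro opt) auto
    then have "0 \<le> t * (B + t * ((p j - m) \<bullet> (p j - m) / 2))"
      using qagg_crit_towards_vertex[OF lam_sum, where y = "f + \<xi>" and p = p and c = c and t = t and j = j] unfolding B_def m_def Lin_def
      by linarith
    then show ?thesis using t by (simp add: zero_le_mult_iff)
  qed
  then have "0 \<le> B" by (rule nonneg_if_nonneg_near_zero)
  moreover have "(\<Sum>i\<in>UNIV. lam i * (2 * (\<xi> \<bullet> (p i - p j)) - (norm (p i - p j))\<^sup>2 / 2 - c i))
       = 2 * (\<xi> \<bullet> m) - 2 * (\<Sum>i\<in>UNIV. lam i) * (\<xi> \<bullet> p j) - Lin + m \<bullet> p j
         - (\<Sum>i\<in>UNIV. lam i) * (p j \<bullet> p j) / 2"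
    by (simp add: m_def Lin_def power2_norm_eq_inner inner_diff_left inner_diff_right inner_commute
        algebra_simps sum.distrib sum_subtractf sum_distrib_left sum_distrib_right inner_sum_left
        inner_sum_right add_divide_distrib diff_divide_distrib)
  ultimately show ?thesis using lam_sum unfolding B_def m_def[symmetric]
    by (simp add: power2_norm_eq_inner inner_diff_left inner_diff_right inner_add_left
        inner_add_right inner_commute algebra_simps)
qed

section \<open>Aggregation of least-squares fits on column spans\<close>

definition col_span :: "real^'p^'n \<Rightarrow> 'p set \<Rightarrow> (real^'n) set" where
  "col_span X S = span ((\<lambda>j. column j X) ` S)"

lemma proj_cols_eq_closest_point: "proj_cols X S y = closest_point (col_span X S) y"
  by (simp add: proj_cols_def col_span_def)

lemma subspace_col_span: "subspace (col_span X S)"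
  by (simp add: col_span_def)

lemma col_span_mono: "S \<subseteq> T \<Longrightarrow> col_span X S \<subseteq> col_span X T"
  unfolding col_span_def by (intro span_mono image_mono)

lemma dim_col_span_le:
  fixes X :: "real^'p::finite^'n::finite"
  shows "dim (col_span X S) \<le> card S"
proof -
  have "dim (col_span X S) = dim ((\<lambda>j. column j X) ` S)" by (simp add: col_span_def)
  also have "\<dots> \<le> card ((\<lambda>j. column j X) ` S)" by (rule dim_le_card) (auto intro: span_base)
  also have "\<dots> \<le> card S" by (rule card_image_le) simp
  finally show ?thesis .
qed

lemma matrix_vector_mult_in_col_span:
  fixes X :: "real^'p::finite^'n::finite"
  shows "X *v \<theta> \<in> col_span X {j. \<theta> $ j \<noteq> 0}"
proof -
  have "X *v \<theta> = (\<Sum>j\<in>{j. \<theta> $ j \<noteq> 0}. (\<theta> $ j) *\<^sub>R column j X)"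
    by (simp add: matrix_mult_sum scalar_mult_eq_scaleR sum.mono_neutral_right)
  also have "\<dots> \<in> col_span X {j. \<theta> $ j \<noteq> 0}"
    unfolding col_span_def by (intro span_sum span_scale span_base) auto
  finally show ?thesis .
qed

lemma proj_cols_excess_le:
  fixes X :: "real^'p::finite^'n::finite" and \<xi> y :: "real^'n"
  defines "L \<equiv> \<lambda>J::'p set. ln (1 / prior J)"
  assumes K: "K\<^sup>2 \<le> Kh\<^sup>2"
    and pair: "(norm (closest_point (col_span X (J \<union> J')) \<xi>))\<^sup>2
                 \<le> 4 * K\<^sup>2 * (card (J \<union> J') / 2 + x + L J + L J')"
  shows "2 * (\<xi> \<bullet> (proj_cols X J' y - proj_cols X J y)) - (norm (proj_cols X J' y - proj_cols X J y))\<^sup>2 / 2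
           - 32 * Kh\<^sup>2 * L J' \<le> 8 * K\<^sup>2 * (card J / 2 + x + L J)"
proof -
  let ?V = "col_span X (J \<union> J')"
  have "proj_cols X J' y \<in> ?V" "proj_cols X J y \<in> ?V"
    using closest_point_in_subspace[OF subspace_col_span] col_span_mono[of _ "J \<union> J'" X]
    unfolding proj_cols_eq_closest_point by blast+
  then have "2 * (\<xi> \<bullet> (proj_cols X J' y - proj_cols X J y)) - (norm (proj_cols X J' y - proj_cols X J y))\<^sup>2 / 2
      \<le> 2 * (norm (closest_point ?V \<xi>))\<^sup>2"
    by (intro inner_closest_point_subspace_le subspace_col_span subspace_diff)
  moreover have "2 * (norm (closest_point ?V \<xi>))\<^sup>2 \<le> 8 * K\<^sup>2 * (card J / 2 + x + L J) + 32 * Kh\<^sup>2 * L J'"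
  proof -
    have L': "0 \<le> L J'" "real (card (J \<union> J')) \<le> card J + L J'"
      using card_le_ln_inverse_prior[of J'] card_Un_le[of J J'] unfolding L_def
      by (simp_all add: order_trans[OF of_nat_0_le_iff])
    have "2 * (norm (closest_point ?V \<xi>))\<^sup>2 \<le> 8 * K\<^sup>2 * (card (J \<union> J') / 2 + x + L J + L J')"
      using pair by simp
    also have "\<dots> \<le> 8 * K\<^sup>2 * ((card J / 2 + x + L J) + 3/2 * L J')"
      using L' by (intro mult_left_mono) auto
    also have "\<dots> = 8 * K\<^sup>2 * (card J / 2 + x + L J) + 12 * (K\<^sup>2 * L J')"
      by (simp add: algebra_simps)
    also have "\<dots> \<le> 8 * K\<^sup>2 * (card J / 2 + x + L J) + 32 * (Kh\<^sup>2 * L J')"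
      using mult_right_mono[OF K L'(1)] mult_nonneg_nonneg[OF zero_le_power2[of Kh] L'(1)] by linarith
    finally show ?thesis by simp
  qed
  ultimately show ?thesis by simp
qed

lemma convex_combination_le:
  fixes g :: "'i::finite \<Rightarrow> real"
  assumes "\<And>i. lam i \<ge> 0" "(\<Sum>i\<in>UNIV. lam i) = 1" "\<And>i. g i \<le> R"
  shows "(\<Sum>i\<in>UNIV. lam i * g i) \<le> R"
proof -
  have "(\<Sum>i\<in>UNIV. lam i * g i) \<le> (\<Sum>i\<in>UNIV. lam i * R)"
    using assms(1,3) by (intro sum_mono mult_left_mono) auto
  also have "\<dots> = R" using assms(2) by (simp add: sum_distrib_right[symmetric])
  finally show ?thesis .
qed

lemma oracle_remainder_le:
  fixes a h x k q L :: real
  assumes "0 \<le> a" "a \<le> h" "0 \<le> x" "0 \<le> k" "k \<le> q" "L \<le> 3/4 + 2 * q"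
  shows "32 * h * L + 12 * a * (k / 2 + x + L) \<le> 31 * a * x + (64 * h + 4 * a) * (1/2 + 2 * q)"
proof -
  have "h * L \<le> h * (3/4 + 2 * q)" "a * L \<le> a * (3/4 + 2 * q)" "a * k \<le> a * q" "a * q \<le> h * q"
    "0 \<le> a * x" "0 \<le> a * q"
    using assms by (auto intro: mult_left_mono mult_right_mono)
  moreover have "32 * h * L + 12 * a * (k / 2 + x + L) = 32 * (h * L) + 6 * (a * k) + 12 * (a * x) + 12 * (a * L)"
    "31 * a * x + (64 * h + 4 * a) * (1/2 + 2 * q) = 31 * (a * x) + 32 * h + 2 * a + 128 * (h * q) + 8 * (a * q)"
    "h * (3/4 + 2 * q) = 3/4 * h + 2 * (h * q)" "a * (3/4 + 2 * q) = 3/4 * a + 2 * (a * q)"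
    by (simp_all add: algebra_simps)
  ultimately show ?thesis using assms(1,2) by linarith
qed

lemma spa_oracle_inequality_on_event:
  fixes X :: "real^'p::finite^'n::finite" and f \<xi> :: "real^'n" and \<theta> :: "real^'p"
  defines "L \<equiv> \<lambda>J::'p set. ln (1 / prior J)"
  assumes K: "K\<^sup>2 \<le> Kh\<^sup>2" and x: "0 \<le> x"
    and pair: "\<And>J J'. (norm (closest_point (col_span X (J \<union> J')) \<xi>))\<^sup>2
                 \<le> 4 * K\<^sup>2 * (card (J \<union> J') / 2 + x + L J + L J')"
    and single: "\<And>J. (norm (closest_point (col_span X J) \<xi>))\<^sup>2 \<le> 4 * K\<^sup>2 * (card J / 2 + x + L J)"
    and W: "is_spa_weight X Kh (f + \<xi>) lam"
  shows "(norm (mu_lam X lam (f + \<xi>) - f))\<^sup>2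
           \<le> (norm (X *v \<theta> - f))\<^sup>2 + 31 * K\<^sup>2 * x
             + (64 * Kh\<^sup>2 + 4 * K\<^sup>2)
               * (1/2 + 2 * real (l0norm \<theta>) * ln (exp 1 * real CARD('p) / max 1 (real (l0norm \<theta>))))"
proof -
  define y where "y = f + \<xi>"
  define p where "p = (\<lambda>J. proj_cols X J y)"
  define c where "c = (\<lambda>J. 32 * Kh\<^sup>2 * L J)"
  define J where "J = {j. \<theta> $ j \<noteq> 0}"
  define k where "k = real (card J)"
  define l where "l = ln (exp 1 * real CARD('p) / max 1 k)"
  have lam: "\<And>i. lam i \<ge> 0" "(\<Sum>i\<in>UNIV. lam i) = 1"
    "\<And>lam'. (\<And>i. lam' i \<ge> 0) \<Longrightarrow> (\<Sum>i\<in>UNIV. lam' i) = 1 \<Longrightarrow> qagg_crit y p c lam \<le> qagg_crit y p c lam'"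
    using W unfolding is_spa_weight_def simplex_weights_def spa_crit_eq_qagg_crit p_def c_def y_def L_def
    by auto
  have agg_bound: "(norm (f - (\<Sum>i\<in>UNIV. lam i *\<^sub>R p i)))\<^sup>2 \<le> (norm (f - p J))\<^sup>2 + c J
      + (\<Sum>i\<in>UNIV. lam i * (2 * (\<xi> \<bullet> (p i - p J)) - (norm (p i - p J))\<^sup>2 / 2 - c i))"
    using lam unfolding y_def by (rule qagg_oracle_bound)
  have excess: "(\<Sum>i\<in>UNIV. lam i * (2 * (\<xi> \<bullet> (p i - p J)) - (norm (p i - p J))\<^sup>2 / 2 - c i))
      \<le> 8 * K\<^sup>2 * (k / 2 + x + L J)"
    using proj_cols_excess_le[OF K pair[unfolded L_def]] unfolding p_def c_def k_def L_def
    by (intro convex_combination_le lam(1,2))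
  have "(norm (f - p J))\<^sup>2 \<le> (norm (f - X *v \<theta>))\<^sup>2 + (norm (closest_point (col_span X J) \<xi>))\<^sup>2"
    unfolding p_def y_def proj_cols_eq_closest_point J_def
    by (rule norm_closest_point_subspace_noise_le[OF subspace_col_span matrix_vector_mult_in_col_span])
  with single[of J] have near: "(norm (f - p J))\<^sup>2 \<le> (norm (f - X *v \<theta>))\<^sup>2 + 4 * K\<^sup>2 * (k / 2 + x + L J)"
    by (simp add: k_def)
  have l: "1 \<le> l"
    unfolding l_def k_def by (intro one_le_ln_sparsity) (auto simp: card_mono)
  have "(norm (mu_lam X lam (f + \<xi>) - f))\<^sup>2 = (norm (f - (\<Sum>i\<in>UNIV. lam i *\<^sub>R p i)))\<^sup>2"
    by (simp add: mu_lam_def p_def y_def norm_minus_commute)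
  also have "\<dots> \<le> (norm (X *v \<theta> - f))\<^sup>2 + (32 * Kh\<^sup>2 * L J + 12 * K\<^sup>2 * (k / 2 + x + L J))"
    using agg_bound excess near unfolding c_def by (simp add: norm_minus_commute algebra_simps)
  also have "32 * Kh\<^sup>2 * L J + 12 * K\<^sup>2 * (k / 2 + x + L J)
      \<le> 31 * K\<^sup>2 * x + (64 * Kh\<^sup>2 + 4 * K\<^sup>2) * (1/2 + 2 * k * l)"
  proof (rule oracle_remainder_le[where q = "k * l", unfolded mult.assoc[symmetric]])
    show "k \<le> k * l" using l by (simp add: k_def mult_le_cancel_left1)
    show "L J \<le> 3/4 + 2 * k * l"
      using ln_inverse_prior_le[of J] unfolding L_def k_def l_def .
  qed (use K x in \<open>auto simp: k_def\<close>)
  finally show ?thesis by (simp add: l0norm_def k_def J_def l_def)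
qed

section \<open>The high-probability event\<close>

lemma (in finite_measure) measure_UN_le_weighted:
  fixes A :: "'i::finite \<Rightarrow> 'a set"
  assumes "\<And>i. A i \<in> sets M" "\<And>i. measure M (A i) \<le> c * w i"
  shows "measure M (\<Union>i. A i) \<le> c * (\<Sum>i\<in>UNIV. w i)"
proof -
  have "measure M (\<Union>i. A i) \<le> (\<Sum>i\<in>UNIV. measure M (A i))"
    using assms(1) by (intro finite_measure_subadditive_finite) auto
  also have "\<dots> \<le> (\<Sum>i\<in>UNIV. c * w i)" using assms(2) by (rule sum_mono)
  finally show ?thesis by (simp add: sum_distrib_left)
qed

text \<open>Union bound over all pairs of supports, with the tail levels shifted by
  \<open>log (1/\<pi>\<^sub>J) + log (1/\<pi>\<^sub>J\<^sub>')\<close> so that the failure probabilities sum up to \<open>e\<^sup>-\<^sup>x\<close>.\<close>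
lemma subgauss_col_span_event:
  fixes X :: "real^'p::finite^'n::finite" and \<xi> :: "'a \<Rightarrow> real^'n"
  defines "L \<equiv> \<lambda>J::'p set. ln (1 / prior J)"
  assumes M: "prob_space M" and [measurable]: "\<xi> \<in> borel_measurable M"
    and sg: "subgauss_cond M \<xi> K" and K: "K > 0"
  shows "\<exists>E\<in>sets M. 1 - 2 * exp (- x) \<le> measure M E \<and> (\<forall>\<omega>\<in>E.
           (\<forall>J J'. (norm (closest_point (col_span X (J \<union> J')) (\<xi> \<omega>)))\<^sup>2
                     \<le> 4 * K\<^sup>2 * (card (J \<union> J') / 2 + x + L J + L J')) \<and>
           (\<forall>J. (norm (closest_point (col_span X J) (\<xi> \<omega>)))\<^sup>2 \<le> 4 * K\<^sup>2 * (card J / 2 + x + L J)))"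
proof -
  interpret prob_space M by (rule M)
  define bad where "bad = (\<lambda>S t. {\<omega>\<in>space M. 4 * K\<^sup>2 * (card S / 2 + t) \<le> (norm (closest_point (col_span X S) (\<xi> \<omega>)))\<^sup>2})"
  have [measurable]: "closest_point (col_span X S) \<in> borel_measurable borel" for S
    by (rule borel_measurable_closest_point_subspace[OF subspace_col_span])
  have [measurable]: "bad S t \<in> sets M" for S t
    unfolding bad_def by measurable
  have bad_le: "measure M (bad S t) \<le> exp (- t)" for S t
    unfolding bad_def
    by (intro subgauss_norm_closest_point_tail[OF M _ sg K subspace_col_span dim_col_span_le]) simp
  have exp_L: "exp (- L J) = prior J" for J
    using prior_pos[of J] by (simp add: L_def ln_div)
  have bad2_le: "measure M (bad (J \<union> J') (x + L J + L J')) \<le> exp (- x) * prior J * prior J'" for J J'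
    using bad_le[of "J \<union> J'" "x + L J + L J'"] by (simp add: exp_L[symmetric] mult_exp_exp algebra_simps)
  have bad1_le: "measure M (bad J (x + L J)) \<le> exp (- x) * prior J" for J
    using bad_le[of J "x + L J"] by (simp add: exp_L[symmetric] mult_exp_exp algebra_simps)
  define U2 where "U2 = (\<Union>J. \<Union>J'. bad (J \<union> J') (x + L J + L J'))"
  define U1 where "U1 = (\<Union>J. bad J (x + L J))"
  have "measure M (\<Union>J'. bad (J \<union> J') (x + L J + L J')) \<le> (exp (- x) * prior J) * (\<Sum>J'\<in>UNIV. prior (J' :: 'p set))"
    for J :: "'p set"
    by (intro measure_UN_le_weighted) (use bad2_le in auto)
  then have "measure M U2 \<le> exp (- x) * (\<Sum>J\<in>UNIV. prior (J :: 'p set))"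
    unfolding U2_def by (intro measure_UN_le_weighted) (auto simp: sum_prior)
  then have U2: "measure M U2 \<le> exp (- x)" by (simp add: sum_prior)
  have "measure M U1 \<le> exp (- x) * (\<Sum>J\<in>UNIV. prior (J :: 'p set))"
    unfolding U1_def
    by (intro measure_UN_le_weighted) (use bad1_le in auto)
  then have U1: "measure M U1 \<le> exp (- x)" by (simp add: sum_prior)
  define E where "E = space M - (U2 \<union> U1)"
  have [measurable]: "U2 \<in> sets M" "U1 \<in> sets M" unfolding U2_def U1_def by auto
  have "measure M E = 1 - measure M (U2 \<union> U1)" unfolding E_def by (rule prob_compl) simp
  moreover have "measure M (U2 \<union> U1) \<le> measure M U2 + measure M U1" by (rule measure_Un_le) auto
  ultimately have "1 - 2 * exp (- x) \<le> measure M E" using U1 U2 by linarith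
  moreover have "E \<in> sets M" unfolding E_def by measurable
  moreover have "\<forall>\<omega>\<in>E. (\<forall>J J'. (norm (closest_point (col_span X (J \<union> J')) (\<xi> \<omega>)))\<^sup>2
                     \<le> 4 * K\<^sup>2 * (card (J \<union> J') / 2 + x + L J + L J')) \<and>
           (\<forall>J. (norm (closest_point (col_span X J) (\<xi> \<omega>)))\<^sup>2 \<le> 4 * K\<^sup>2 * (card J / 2 + x + L J))"
    unfolding E_def U2_def U1_def bad_def by (auto simp: not_le add.assoc intro: less_imp_le)
  ultimately show ?thesis by blast
qed

theorem theorem7p3:
  fixes M :: "'a measure"
    and X :: "real^'p::finite^'n::finite"
    and f :: "real^'n"
    and \<xi> :: "'a \<Rightarrow> real^'n"
    and K :: real
    and Khat :: "'a \<Rightarrow> real"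
    and x :: real
  assumes "prob_space M"
    and "\<xi> \<in> borel_measurable M"
    and "Khat \<in> borel_measurable M"
    and "K > 0"
    and "subgauss_cond M \<xi> K"
    and "\<forall>k>0. subgauss_cond M \<xi> k \<longrightarrow> K \<le> k"
    and "x > 0"
  shows "\<exists>E \<in> sets M.
      measure M E \<ge> 1 - measure M {\<omega> \<in> space M. (Khat \<omega>)\<^sup>2 < K\<^sup>2} - 3 * exp (- x) \<and>
      (\<forall>\<omega> \<in> E. \<forall>lam. is_spa_weight X (Khat \<omega>) (f + \<xi> \<omega>) lam \<longrightarrow>
         (\<forall>\<theta> :: real^'p.
            (norm (mu_lam X lam (f + \<xi> \<omega>) - f))\<^sup>2
            \<le> (norm (X *v \<theta> - f))\<^sup>2 + 31 * K\<^sup>2 * x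
              + (64 * (Khat \<omega>)\<^sup>2 + 4 * K\<^sup>2)
                * (1/2 + 2 * real (l0norm \<theta>)
                       * ln (exp 1 * real CARD('p) / max 1 (real (l0norm \<theta>))))))"
proof -
  interpret prob_space M by (rule assms(1))
  note [measurable] = assms(2,3)
  obtain E where E: "E \<in> sets M" "1 - 2 * exp (- x) \<le> measure M E"
    and good: "\<forall>\<omega>\<in>E. (\<forall>J J'. (norm (closest_point (col_span X (J \<union> J')) (\<xi> \<omega>)))\<^sup>2
                     \<le> 4 * K\<^sup>2 * (card (J \<union> J') / 2 + x + ln (1 / prior J) + ln (1 / prior J'))) \<and>
           (\<forall>J. (norm (closest_point (col_span X J) (\<xi> \<omega>)))\<^sup>2 \<le> 4 * K\<^sup>2 * (card J / 2 + x + ln (1 / prior J)))"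
    using subgauss_col_span_event[OF assms(1,2,5,4), where X = X and x = x] by blast
  define C where "C = {\<omega> \<in> space M. (Khat \<omega>)\<^sup>2 < K\<^sup>2}"
  have C: "C \<in> sets M" unfolding C_def by measurable
  have "measure M E \<le> measure M (E - C) + measure M C"
    using E(1) C by (intro order_trans[OF finite_measure_mono measure_Un_le]) auto
  then have "1 - measure M C - 3 * exp (- x) \<le> measure M (E - C)"
    using E(2) by (smt (verit) exp_ge_zero)
  moreover have "(norm (mu_lam X lam (f + \<xi> \<omega>) - f))\<^sup>2
            \<le> (norm (X *v \<theta> - f))\<^sup>2 + 31 * K\<^sup>2 * x
              + (64 * (Khat \<omega>)\<^sup>2 + 4 * K\<^sup>2)
                * (1/2 + 2 * real (l0norm \<theta>) * ln (exp 1 * real CARD('p) / max 1 (real (l0norm \<theta>))))"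
    if "\<omega> \<in> E - C" "is_spa_weight X (Khat \<omega>) (f + \<xi> \<omega>) lam" for \<omega> lam \<theta>
    using that good sets.sets_into_space[OF E(1)] assms(7)
    by (intro spa_oracle_inequality_on_event) (auto simp: C_def not_less)
  ultimately show ?thesis using E(1) C unfolding C_def by blast
qed

end
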